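(* Let $R_1,R_2$ be commutative multiplicative hyperrings with identity, and let $f:R_1\to R_2$ be a good homomorphism. Let $\alpha_1$ be a good endomorphism of $R_1$ and $\alpha_2$ a good endomorphism of $R_2$ with $\alpha_2(f(r))=f(\alpha_1(r))$ for every $r\in R_1$. If $I_2$ is an $\alpha_2$-prime hyperideal of $R_2$, then $f^{-1}(I_2)$ is an $\alpha_1$-prime hyperideal of $R_1$.
   Context: A multiplicative hyperring is an abelian group $(R,+)$ with a hyperoperation $\circ:R\times R\to \mathcal P^*(R)$ (nonempty subsets) such that $a\circ(b\circ c)=(a\circ b)\circ c$, $a\circ(b+c)\subseteq a\circ b+a\circ c$, $(b+c)\circ a\subseteq b\circ a+c\circ a$, and $a\circ(-b)=(-a)\circ b=-(a\circ b)$. Products of subsets are unions of elementwise products. Commutative means $a\circ b=b\circ a$. An identity $1$ satisfies $a\in 1\circ a$ for all $a$. A hyperideal is a nonempty $I$ closed under subtraction with $r\circ x\subseteq I$ for $r\in R$, $x\in I$. Standing assumption: all hyperideals are $\mathbf C$-hyperideals, i.e. for every finite product $A=r_1\circ\cdots\circ r_n$, $A\cap I\ne\emptyset$ implies $A\subseteq I$. A good homomorphism $f$ satisfies $f(x+y)=f(x)+f(y)$ and $f(x\circ y)=f(x)\circ f(y)$; a good endomorphism is a good homomorphism $R\to R$. For a good endomorphism $\alpha$, a hyperideal $I$ is $\alpha$-prime if for all $x,y$, $x\circ y\subseteq I$ implies $x\in I$ or $\alpha(y)\in I$. *)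

theory Defs
  imports Main
begin

text \<open>A multiplicative hyperring: the abelian group (R,+) is the type 'a (class ab_group_add),
  and the hyperoperation is a function m :: 'a => 'a => 'a set.\<close>

definition hset_prod :: "('a \<Rightarrow> 'a \<Rightarrow> 'a set) \<Rightarrow> 'a set \<Rightarrow> 'a set \<Rightarrow> 'a set" where
  "hset_prod m A B = (\<Union>a\<in>A. \<Union>b\<in>B. m a b)"

definition hset_sum :: "'a::ab_group_add set \<Rightarrow> 'a set \<Rightarrow> 'a set" where
  "hset_sum A B = {a + b | a b. a \<in> A \<and> b \<in> B}"

definition mult_hyperring :: "('a::ab_group_add \<Rightarrow> 'a \<Rightarrow> 'a set) \<Rightarrow> bool" where
  "mult_hyperring m \<longleftrightarrow>
     (\<forall>a b. m a b \<noteq> {}) \<and>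
     (\<forall>a b c. hset_prod m {a} (m b c) = hset_prod m (m a b) {c}) \<and>
     (\<forall>a b c. m a (b + c) \<subseteq> hset_sum (m a b) (m a c)) \<and>
     (\<forall>a b c. m (b + c) a \<subseteq> hset_sum (m b a) (m c a)) \<and>
     (\<forall>a b. m a (- b) = uminus ` (m a b) \<and> m (- a) b = uminus ` (m a b))"

definition hcommutative :: "('a \<Rightarrow> 'a \<Rightarrow> 'a set) \<Rightarrow> bool" where
  "hcommutative m \<longleftrightarrow> (\<forall>a b. m a b = m b a)"

definition has_hidentity :: "('a \<Rightarrow> 'a \<Rightarrow> 'a set) \<Rightarrow> bool" where
  "has_hidentity m \<longleftrightarrow> (\<exists>e. \<forall>a. a \<in> m e a)"

text \<open>Finite product r1 o ... o rn of a nonempty list (right-bracketed; bracketing is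
  irrelevant by associativity).\<close>
fun hlist_prod :: "('a \<Rightarrow> 'a \<Rightarrow> 'a set) \<Rightarrow> 'a list \<Rightarrow> 'a set" where
  "hlist_prod m [] = {}"
| "hlist_prod m [x] = {x}"
| "hlist_prod m (x # y # ys) = hset_prod m {x} (hlist_prod m (y # ys))"

definition hyperideal :: "('a::ab_group_add \<Rightarrow> 'a \<Rightarrow> 'a set) \<Rightarrow> 'a set \<Rightarrow> bool" where
  "hyperideal m I \<longleftrightarrow> I \<noteq> {} \<and> (\<forall>x\<in>I. \<forall>y\<in>I. x - y \<in> I) \<and> (\<forall>r. \<forall>x\<in>I. m r x \<subseteq> I)"

definition C_hyperideal :: "('a::ab_group_add \<Rightarrow> 'a \<Rightarrow> 'a set) \<Rightarrow> 'a set \<Rightarrow> bool" where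
  "C_hyperideal m I \<longleftrightarrow> hyperideal m I \<and>
     (\<forall>xs. xs \<noteq> [] \<longrightarrow> hlist_prod m xs \<inter> I \<noteq> {} \<longrightarrow> hlist_prod m xs \<subseteq> I)"

definition good_hom :: "('a::ab_group_add \<Rightarrow> 'a \<Rightarrow> 'a set) \<Rightarrow> ('b::ab_group_add \<Rightarrow> 'b \<Rightarrow> 'b set)
    \<Rightarrow> ('a \<Rightarrow> 'b) \<Rightarrow> bool" where
  "good_hom m1 m2 f \<longleftrightarrow> (\<forall>x y. f (x + y) = f x + f y) \<and> (\<forall>x y. f ` (m1 x y) = m2 (f x) (f y))"

definition alpha_prime :: "('a::ab_group_add \<Rightarrow> 'a \<Rightarrow> 'a set) \<Rightarrow> ('a \<Rightarrow> 'a) \<Rightarrow> 'a set \<Rightarrow> bool" where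
  "alpha_prime m \<alpha> I \<longleftrightarrow> hyperideal m I \<and>
     (\<forall>x y. m x y \<subseteq> I \<longrightarrow> x \<in> I \<or> \<alpha> y \<in> I)"

end

theory Submission
  imports Defs
begin

text \<open>A good homomorphism f is additive and maps x \<circ> y onto f x \<circ> f y, so
  m1 x y \<subseteq> f -` I holds exactly when m2 (f x) (f y) \<subseteq> I. Hence f -` I inherits
  the hyperideal axioms from I, and the \<alpha>-prime condition transfers along
  \<alpha>2 (f y) = f (\<alpha>1 y).\<close>

lemma good_hom_diff:
  assumes "good_hom m1 m2 f"
  shows "f (x - y) = f x - f y"
proof -
  have "f (x - y) + f y = f x"
    using assms unfolding good_hom_def by (metis diff_add_cancel)
  then show ?thesis
    by (simp add: eq_diff_eq)
qed

lemma good_hom_zero: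
  assumes "good_hom m1 m2 f"
  shows "f 0 = 0"
  using good_hom_diff [OF assms, of 0 0] by simp

lemma good_hom_hprod_subset_vimage_iff:
  assumes "good_hom m1 m2 f"
  shows "m1 x y \<subseteq> f -` I \<longleftrightarrow> m2 (f x) (f y) \<subseteq> I"
proof -
  have "m2 (f x) (f y) = f ` m1 x y"
    using assms unfolding good_hom_def by simp
  then show ?thesis
    by auto
qed

lemma hyperideal_zero_mem:
  assumes "hyperideal m I"
  shows "0 \<in> I"
  using assms unfolding hyperideal_def by (metis diff_self ex_in_conv)

lemma hyperideal_vimage:
  assumes f: "good_hom m1 m2 f" and I: "hyperideal m2 I"
  shows "hyperideal m1 (f -` I)"
  unfolding hyperideal_def
proof (intro conjI ballI allI)
  show "f -` I \<noteq> {}"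
    using hyperideal_zero_mem [OF I] good_hom_zero [OF f] by blast
next
  fix x y
  assume "x \<in> f -` I" "y \<in> f -` I"
  then show "x - y \<in> f -` I"
    using I good_hom_diff [OF f] unfolding hyperideal_def by simp
next
  fix r x
  assume "x \<in> f -` I"
  then have "m2 (f r) (f x) \<subseteq> I"
    using I unfolding hyperideal_def by blast
  then show "m1 r x \<subseteq> f -` I"
    using good_hom_hprod_subset_vimage_iff [OF f] by blast
qed

lemma alpha_prime_vimage:
  assumes f: "good_hom m1 m2 f"
    and comm: "\<And>r. \<alpha>2 (f r) = f (\<alpha>1 r)"
    and I: "alpha_prime m2 \<alpha>2 I"
  shows "alpha_prime m1 \<alpha>1 (f -` I)"
  unfolding alpha_prime_def
proof (intro conjI allI impI)
  show "hyperideal m1 (f -` I)"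
    using hyperideal_vimage [OF f] I unfolding alpha_prime_def by blast
next
  fix x y
  assume "m1 x y \<subseteq> f -` I"
  then have "m2 (f x) (f y) \<subseteq> I"
    using good_hom_hprod_subset_vimage_iff [OF f] by blast
  then have "f x \<in> I \<or> \<alpha>2 (f y) \<in> I"
    using I unfolding alpha_prime_def by blast
  then show "x \<in> f -` I \<or> \<alpha>1 y \<in> f -` I"
    by (simp add: comm)
qed

theorem mainTheorem11:
  fixes m1 :: "'a::ab_group_add \<Rightarrow> 'a \<Rightarrow> 'a set"
    and m2 :: "'b::ab_group_add \<Rightarrow> 'b \<Rightarrow> 'b set"
    and f :: "'a \<Rightarrow> 'b" and \<alpha>1 :: "'a \<Rightarrow> 'a" and \<alpha>2 :: "'b \<Rightarrow> 'b" and I2 :: "'b set"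
  assumes R1: "mult_hyperring m1" "hcommutative m1" "has_hidentity m1"
    and R2: "mult_hyperring m2" "hcommutative m2" "has_hidentity m2"
    and C1: "\<forall>I. hyperideal m1 I \<longrightarrow> C_hyperideal m1 I"
    and C2: "\<forall>I. hyperideal m2 I \<longrightarrow> C_hyperideal m2 I"
    and f: "good_hom m1 m2 f"
    and a1: "good_hom m1 m1 \<alpha>1"
    and a2: "good_hom m2 m2 \<alpha>2"
    and comm: "\<forall>r. \<alpha>2 (f r) = f (\<alpha>1 r)"
    and I2: "alpha_prime m2 \<alpha>2 I2"
  shows "alpha_prime m1 \<alpha>1 (f -` I2)"
  using alpha_prime_vimage [OF f _ I2] comm by blast

end
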